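(* Let $G=(V,E)$ be a $p$-regular multigraph and define $w_{\max}(G)=\sum_\sigma w(\sigma)$, the sum over even edge colorings $\sigma$ of $G$ (up to renaming of colors) that use exactly $c_{\max}(G)$ colors. Then, as $n\to\infty$ with $G$ fixed, $$\mathbb{E}_{T\sim\mathrm{Wig}(p,n,1)}[m_G(T)]=\Big(1+O_G\big(\tfrac1n\big)\Big)\,w_{\max}(G)\,n^{c_{\max}(G)}.$$
   Context: $\mathrm{Wig}(p,n,1)$ is the law of $W\in\mathrm{Sym}^p(\mathbb{R}^n)$ with $W_{i_1,\dots,i_p}=\frac{1}{\sqrt{p!}}\sum_{\pi\in S_p}G_{i_{\pi(1)},\dots,i_{\pi(p)}}$, $G$ with i.i.d. $\mathcal{N}(0,1)$ entries. Multigraphs may have loops and parallel edges (a loop contributes 2 to the degree); for $i\in[n]^E$, $i(\partial v)$ is the multiset of labels at $v$ (loops twice), and $m_G(T)=\sum_{i\in[n]^E}\prod_vT_{i(\partial v)}$. An edge coloring $\sigma:E\to C$ is even if each multiset occurring among the $\sigma(\partial v)$, $v\in V$, occurs an even number of times; $c_{\max}(G)$ is the largest number of colors used by an even coloring. For an even coloring whose distinct colored neighborhoods are $N_1,\dots,N_m$, $N_i$ occurring $f_i$ times, and with $c_j(N_i)$ the multiplicity of color $j$ in $N_i$, the weight is $w(\sigma)=\prod_{i=1}^m\big[(f_i-1)!!\prod_{j\in C}c_j(N_i)!^{f_i/2}\big]$. *)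

theory Defs
  imports "HOL-Probability.Probability" "HOL-Library.Multiset"
begin

(* A multigraph with vertex set V and edge set E; ends e is the multiset of the
   two endpoints of e (a loop at v is {#v,v#}). *)
definition p_regular_multigraph ::
  "nat \<Rightarrow> 'v set \<Rightarrow> 'e set \<Rightarrow> ('e \<Rightarrow> 'v multiset) \<Rightarrow> bool" where
  "p_regular_multigraph p V E ends \<longleftrightarrow>
     finite V \<and> finite E \<and>
     (\<forall>e\<in>E. size (ends e) = 2 \<and> set_mset (ends e) \<subseteq> V) \<and>
     (\<forall>v\<in>V. (\<Sum>e\<in>E. count (ends e) v) = p)"

(* i(\<partial>v): multiset of labels of the edges at v, loops counted twice *)
definition lab_at :: "('e \<Rightarrow> 'v multiset) \<Rightarrow> 'e set \<Rightarrow> ('e \<Rightarrow> 'a) \<Rightarrow> 'v \<Rightarrow> 'a multiset" where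
  "lab_at ends E i v = (\<Sum>e\<in>E. replicate_mset (count (ends e) v) (i e))"

(* m_G(T) for a symmetric tensor T, given as a function on index lists;
   T_{i(\<partial>v)} is T evaluated at any ordering of the multiset, here the sorted one *)
definition mG :: "'v set \<Rightarrow> 'e set \<Rightarrow> ('e \<Rightarrow> 'v multiset) \<Rightarrow> nat \<Rightarrow> (nat list \<Rightarrow> real) \<Rightarrow> real" where
  "mG V E ends n T = (\<Sum>i\<in>E \<rightarrow>\<^sub>E {..<n}. \<Prod>v\<in>V. T (sorted_list_of_multiset (lab_at ends E i v)))"

definition idx :: "nat \<Rightarrow> nat \<Rightarrow> nat list set" where
  "idx p n = {xs. length xs = p \<and> set xs \<subseteq> {..<n}}"

definition gauss_space :: "nat \<Rightarrow> nat \<Rightarrow> (nat list \<Rightarrow> real) measure" where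
  "gauss_space p n = (\<Pi>\<^sub>M xs\<in>idx p n. density lborel std_normal_density)"

definition wig :: "nat \<Rightarrow> (nat list \<Rightarrow> real) \<Rightarrow> nat list \<Rightarrow> real" where
  "wig p G is = (1 / sqrt (fact p)) *
     (\<Sum>\<pi>\<in>{\<pi>. \<pi> permutes {..<p}}. G (map (\<lambda>k. is ! \<pi> k) [0..<p]))"

definition wig_moment :: "nat \<Rightarrow> nat \<Rightarrow> 'v set \<Rightarrow> 'e set \<Rightarrow> ('e \<Rightarrow> 'v multiset) \<Rightarrow> real" where
  "wig_moment p n V E ends = (\<integral>G. mG V E ends n (wig p G) \<partial>gauss_space p n)"

definition even_coloring :: "'v set \<Rightarrow> 'e set \<Rightarrow> ('e \<Rightarrow> 'v multiset) \<Rightarrow> ('e \<Rightarrow> nat) \<Rightarrow> bool" where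
  "even_coloring V E ends \<sigma> \<longleftrightarrow>
     (\<forall>v\<in>V. even (card {u\<in>V. lab_at ends E \<sigma> u = lab_at ends E \<sigma> v}))"

definition c_max :: "'v set \<Rightarrow> 'e set \<Rightarrow> ('e \<Rightarrow> 'v multiset) \<Rightarrow> nat" where
  "c_max V E ends = Max {card (\<sigma> ` E) | \<sigma>. even_coloring V E ends \<sigma>}"

fun dfact :: "nat \<Rightarrow> nat" where
  "dfact 0 = 1"
| "dfact (Suc 0) = 1"
| "dfact (Suc (Suc n)) = Suc (Suc n) * dfact n"

definition weight :: "'v set \<Rightarrow> 'e set \<Rightarrow> ('e \<Rightarrow> 'v multiset) \<Rightarrow> ('e \<Rightarrow> nat) \<Rightarrow> real" where
  "weight V E ends \<sigma> =
     (\<Prod>N\<in>lab_at ends E \<sigma> ` V.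
        let f = card {v\<in>V. lab_at ends E \<sigma> v = N}
        in real (dfact (f - 1)) * (\<Prod>j\<in>set_mset N. (fact (count N j)) ^ (f div 2)))"

(* Such colourings are the surjections E \<rightarrow> {..<c} modulo
   the free action of S_c, so we sum over surjections and divide by c!. *)
definition w_max :: "'v set \<Rightarrow> 'e set \<Rightarrow> ('e \<Rightarrow> 'v multiset) \<Rightarrow> real" where
  "w_max V E ends =
     (let c = c_max V E ends in
      (\<Sum>\<sigma>\<in>{\<sigma>\<in>E \<rightarrow>\<^sub>E {..<c}. \<sigma> ` E = {..<c} \<and> even_coloring V E ends \<sigma>}.
          weight V E ends \<sigma>) / fact c)"

end

(* Write W_L for the entry of W at an index list L.  Grouping the p! permutations of L by the
   rearrangement of L they produce gives W_L = c(L) / sqrt(p!) times the sum of G over the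
   distinct rearrangements of L, where c(L) is the product of the factorials of the
   multiplicities in L.  There are p! / c(L) such rearrangements, so W_L is centered normal
   with variance c(L), and entries at different index multisets are independent, being
   functions of disjoint sets of coordinates of G.

   Expanding m_G(T) over labelings i : E -> [n] and grouping the vertices by their labeled
   neighborhoods, the expected value of the term of i is the product of (f-1)!! c(N)^(f/2)
   over the distinct neighborhoods N, f being the number of occurrences of N, when all f are
   even, and 0 otherwise; that is, w(i) for even i and 0 otherwise.  A labeling using exactly
   k labels is, in exactly k! ways, an injection [k] -> [n] composed with a coloring of E onto
   [k], so E m_G(T) is the sum over k <= c_max of S_k / k! * n (n-1) ... (n-k+1), with S_k the
   total weight of the even colorings onto [k].  The term k = c_max is
   w_max n^(c_max) + O(n^(c_max - 1)), and all other terms are O(n^(c_max - 1)). *)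

theory Submission
  imports Defs "HOL-Combinatorics.Multiset_Permutations"
begin

section \<open>Symmetrized Gaussian entries\<close>

lemma card_permute_list_fiber_eq_stabilizer:
  assumes "mset xs = mset L"
  shows "card {\<pi>. \<pi> permutes {..<length L} \<and> permute_list \<pi> L = xs} =
         card {\<pi>. \<pi> permutes {..<length L} \<and> permute_list \<pi> L = L}"
proof -
  obtain \<tau> where \<tau>: "\<tau> permutes {..<length L}" "permute_list \<tau> L = xs"
    using mset_eq_permutation[OF assms] .
  have inv_\<tau>: "inv \<tau> permutes {..<length L}"
    using \<tau>(1) by (rule permutes_inv)
  have "bij_betw (\<lambda>\<rho>. \<rho> \<circ> \<tau>) {\<rho>. \<rho> permutes {..<length L} \<and> permute_list \<rho> L = L}
          {\<pi>. \<pi> permutes {..<length L} \<and> permute_list \<pi> L = xs}"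
  proof (rule bij_betw_byWitness[where f' = "\<lambda>\<pi>. \<pi> \<circ> inv \<tau>"])
    show "(\<lambda>\<rho>. \<rho> \<circ> \<tau>) ` {\<rho>. \<rho> permutes {..<length L} \<and> permute_list \<rho> L = L}
          \<subseteq> {\<pi>. \<pi> permutes {..<length L} \<and> permute_list \<pi> L = xs}"
      using \<tau> by (auto simp: permutes_compose permute_list_compose)
    have "permute_list (\<pi> \<circ> inv \<tau>) L = L" if "permute_list \<pi> L = xs" for \<pi>
    proof -
      have "permute_list (\<pi> \<circ> inv \<tau>) L = permute_list (inv \<tau>) (permute_list \<tau> L)"
        using that \<tau>(2) by (simp add: permute_list_compose[OF inv_\<tau>])
      also have "\<dots> = L"
        using \<tau>(1) by (simp add: permute_list_compose[OF inv_\<tau>, symmetric] permutes_inv_o)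
      finally show ?thesis .
    qed
    then show "(\<lambda>\<pi>. \<pi> \<circ> inv \<tau>) ` {\<pi>. \<pi> permutes {..<length L} \<and> permute_list \<pi> L = xs}
          \<subseteq> {\<rho>. \<rho> permutes {..<length L} \<and> permute_list \<rho> L = L}"
      using inv_\<tau> by (auto simp: permutes_compose)
  qed (use \<tau>(1) in \<open>auto simp: comp_assoc permutes_inv_o\<close>)
  then show ?thesis by (simp add: bij_betw_same_card)
qed

lemma card_permute_list_stabilizer:
  "card {\<pi>. \<pi> permutes {..<length L} \<and> permute_list \<pi> L = L} =
   (\<Prod>x\<in>set_mset (mset L). fact (count (mset L) x))"
proof -
  let ?P = "{\<pi>. \<pi> permutes {..<length L}}"
  let ?stab = "card {\<pi>. \<pi> permutes {..<length L} \<and> permute_list \<pi> L = L}"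
  have "fact (length L) = (\<Sum>\<pi>\<in>?P. 1::nat)"
    by (simp add: card_permutations)
  also have "\<dots> = (\<Sum>xs\<in>permutations_of_multiset (mset L). card {\<pi>\<in>?P. permute_list \<pi> L = xs})"
    by (subst sum.group[symmetric, where g = "\<lambda>\<pi>. permute_list \<pi> L"])
       (auto simp: finite_permutations permutations_of_multisetI)
  also have "\<dots> = (\<Sum>xs\<in>permutations_of_multiset (mset L). ?stab)"
    by (intro sum.cong refl)
       (metis (no_types, lifting) Collect_cong mem_Collect_eq permutations_of_multisetD
          card_permute_list_fiber_eq_stabilizer)
  finally have "card (permutations_of_multiset (mset L)) * ?stab =
      card (permutations_of_multiset (mset L)) * (\<Prod>x\<in>set_mset (mset L). fact (count (mset L) x))"
    using card_permutations_of_multiset_aux[of "mset L"] by simp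
  then show ?thesis
    by (simp add: card_gt_0_iff)
qed

lemma wig_eq_sum_permutations_of_multiset:
  assumes "length L = p"
  shows "wig p G L = (\<Prod>x\<in>set_mset (mset L). fact (count (mset L) x)) / sqrt (fact p) *
           (\<Sum>xs\<in>permutations_of_multiset (mset L). G xs)"
proof -
  let ?P = "{\<pi>. \<pi> permutes {..<length L}}"
  have "(\<Sum>\<pi>\<in>{\<pi>. \<pi> permutes {..<p}}. G (map (\<lambda>k. L ! \<pi> k) [0..<p])) =
        (\<Sum>\<pi>\<in>?P. G (permute_list \<pi> L))"
    using assms by (simp add: permute_list_def)
  also have "\<dots> = (\<Sum>xs\<in>permutations_of_multiset (mset L).
                     \<Sum>\<pi>\<in>{\<pi>\<in>?P. permute_list \<pi> L = xs}. G (permute_list \<pi> L))"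
    by (rule sum.group[symmetric]) (auto simp: finite_permutations permutations_of_multisetI)
  also have "\<dots> = (\<Sum>xs\<in>permutations_of_multiset (mset L).
                     (\<Prod>x\<in>set_mset (mset L). fact (count (mset L) x)) * G xs)"
  proof (intro sum.cong refl)
    fix xs assume "xs \<in> permutations_of_multiset (mset L)"
    then have "card {\<pi>\<in>?P. permute_list \<pi> L = xs} = (\<Prod>x\<in>set_mset (mset L). fact (count (mset L) x))"
      using card_permute_list_fiber_eq_stabilizer[of xs L] card_permute_list_stabilizer[of L]
      by (simp add: permutations_of_multisetD)
    moreover have "(\<Sum>\<pi>\<in>{\<pi>\<in>?P. permute_list \<pi> L = xs}. G (permute_list \<pi> L)) =
                   (\<Sum>\<pi>\<in>{\<pi>\<in>?P. permute_list \<pi> L = xs}. G xs)"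
      by (rule sum.cong) auto
    ultimately show "(\<Sum>\<pi>\<in>{\<pi>\<in>?P. permute_list \<pi> L = xs}. G (permute_list \<pi> L)) =
                     (\<Prod>x\<in>set_mset (mset L). fact (count (mset L) x)) * G xs"
      by simp
  qed
  finally show ?thesis
    unfolding wig_def by (simp add: sum_distrib_left)
qed

lemma prob_space_gauss_space: "prob_space (gauss_space p n)"
  unfolding gauss_space_def by (intro prob_space_PiM prob_space_normal_density) simp

lemma gauss_space_coordinate_distr:
  assumes "xs \<in> idx p n"
  shows "distr (gauss_space p n) borel (\<lambda>G. G xs) = density lborel std_normal_density"
proof -
  have "distr (gauss_space p n) borel (\<lambda>G. G xs) =
        distr (gauss_space p n) (density lborel std_normal_density) (\<lambda>G. G xs)"
    by (intro distr_cong) auto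
  also have "\<dots> = density lborel std_normal_density"
    unfolding gauss_space_def
    by (rule distr_PiM_component) (auto intro: prob_space_normal_density assms)
  finally show ?thesis .
qed

lemma gauss_space_coordinate_distributed:
  assumes "xs \<in> idx p n"
  shows "distributed (gauss_space p n) lborel (\<lambda>G. G xs) (normal_density 0 1)"
  unfolding distributed_def
proof (intro conjI)
  show "distr (gauss_space p n) lborel (\<lambda>G. G xs) = density lborel (normal_density 0 1)"
    using gauss_space_coordinate_distr[OF assms] by (metis distr_cong sets_lborel)
  show "(\<lambda>G. G xs) \<in> measurable (gauss_space p n) lborel"
    unfolding gauss_space_def using assms
    by (simp add: measurable_component_singleton cong: measurable_cong_sets)
qed simp

lemma indep_vars_gauss_space_coordinates:
  "prob_space.indep_vars (gauss_space p n) (\<lambda>_. borel) (\<lambda>xs G. G xs) (idx p n)"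
proof -
  interpret prob_space "gauss_space p n" by (rule prob_space_gauss_space)
  show ?thesis
  proof (cases "idx p n = {}")
    case True
    then show ?thesis by (simp add: indep_vars_def indep_sets_def)
  next
    case False
    have rv: "random_variable borel (\<lambda>G. G xs)" if "xs \<in> idx p n" for xs
      unfolding gauss_space_def using that
      by (simp add: measurable_component_singleton cong: measurable_cong_sets)
    have "distr (gauss_space p n) (\<Pi>\<^sub>M xs\<in>idx p n. borel) (\<lambda>G. \<lambda>xs\<in>idx p n. G xs) =
          distr (gauss_space p n) (\<Pi>\<^sub>M xs\<in>idx p n. borel) (\<lambda>G. G)"
      by (intro distr_cong refl) (auto simp: gauss_space_def space_PiM PiE_def extensional_restrict)
    also have "\<dots> = gauss_space p n"
      unfolding gauss_space_def by (intro distr_id2 sets_PiM_cong) auto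
    also have "\<dots> = (\<Pi>\<^sub>M xs\<in>idx p n. distr (gauss_space p n) borel (\<lambda>G. G xs))"
      by (subst (1) gauss_space_def) (intro PiM_cong refl gauss_space_coordinate_distr[symmetric])
    finally show ?thesis
      using indep_vars_iff_distr_eq_PiM'[OF False rv] by simp
  qed
qed

lemma permutations_of_multiset_subset_idx:
  assumes "size N = p" "set_mset N \<subseteq> {..<n}"
  shows "permutations_of_multiset N \<subseteq> idx p n"
proof
  fix xs assume "xs \<in> permutations_of_multiset N"
  then have "mset xs = N" by (rule permutations_of_multisetD)
  then show "xs \<in> idx p n" using assms by (auto simp: idx_def)
qed

lemma wig_entry_distributed:
  assumes "length L = p" "set L \<subseteq> {..<n}"
  shows "distributed (gauss_space p n) lborel (\<lambda>G. wig p G L)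
           (normal_density 0 (sqrt (\<Prod>x\<in>set_mset (mset L). fact (count (mset L) x))))"
proof -
  interpret prob_space "gauss_space p n" by (rule prob_space_gauss_space)
  let ?P = "permutations_of_multiset (mset L)"
  define s :: real where "s = (\<Prod>x\<in>set_mset (mset L). fact (count (mset L) x))"
  define c :: real where "c = card ?P"
  have "?P \<subseteq> idx p n"
    using permutations_of_multiset_subset_idx[of "mset L" p n] assms by simp
  then have "distributed (gauss_space p n) lborel (\<lambda>G. \<Sum>xs\<in>?P. G xs)
          (normal_density (\<Sum>xs\<in>?P. 0) (sqrt (\<Sum>xs\<in>?P. 1\<^sup>2)))"
    by (intro sum_indep_normal[where X = "\<lambda>xs G. G xs"])
       (auto intro: indep_vars_subset[OF indep_vars_gauss_space_coordinates]
          gauss_space_coordinate_distributed)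
  then have sum_normal: "distributed (gauss_space p n) lborel (\<lambda>G. \<Sum>xs\<in>?P. G xs)
          (normal_density 0 (sqrt c))"
    by (simp add: c_def)
  have s_pos: "s > 0" and c_pos: "c > 0"
    by (auto simp: s_def c_def card_gt_0_iff intro: prod_pos)
  have "real (card ?P * (\<Prod>x\<in>set_mset (mset L). fact (count (mset L) x))) = fact p"
    using card_permutations_of_multiset_aux[of "mset L"] assms(1) by simp
  then have "sqrt (fact p) = sqrt s * sqrt c"
    by (simp add: s_def c_def mult.commute flip: real_sqrt_mult)
  then have "s / sqrt (fact p) * sqrt c = sqrt s"
    using s_pos c_pos by (simp add: field_simps)
  moreover have "(\<lambda>G. wig p G L) = (\<lambda>G. 0 + s / sqrt (fact p) * (\<Sum>xs\<in>?P. G xs))"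
    using wig_eq_sum_permutations_of_multiset[OF assms(1)] by (simp add: s_def)
  ultimately show ?thesis
    using normal_density_affine[OF sum_normal, of "s / sqrt (fact p)" 0] s_pos c_pos
    by (simp add: s_def)
qed

definition normal_moment :: "real \<Rightarrow> nat \<Rightarrow> real" where
  "normal_moment v f = (if even f then real (dfact (f - 1)) * v ^ (f div 2) else 0)"

lemma dfact_odd_mult: "real (dfact (2 * k - 1)) * 2 ^ k * fact k = fact (2 * k)"
proof (induction k)
  case (Suc k)
  have "dfact (2 * Suc k - 1) = (2 * k + 1) * dfact (2 * k - 1)"
    by (cases k) simp_all
  then have "real (dfact (2 * Suc k - 1)) * 2 ^ Suc k * fact (Suc k) =
             real (2 * k + 1) * (2 * real (k + 1)) * (real (dfact (2 * k - 1)) * 2 ^ k * fact k)"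
    by (simp add: algebra_simps)
  also have "\<dots> = fact (2 * Suc k)"
    using Suc.IH by (simp add: algebra_simps)
  finally show ?case .
qed simp

lemma (in prob_space) normal_moment_distributed:
  assumes X: "distributed M lborel X (normal_density 0 \<sigma>)" and \<sigma>: "0 < \<sigma>"
  shows "integrable M (\<lambda>x. X x ^ f)"
    and "expectation (\<lambda>x. X x ^ f) = normal_moment (\<sigma>\<^sup>2) f"
proof -
  have int: "integrable lborel (\<lambda>x. normal_density 0 \<sigma> x * x ^ f)"
    using integrable_normal_moment[OF \<sigma>, of 0 f] by simp
  show "integrable M (\<lambda>x. X x ^ f)"
    using distributed_integrable[OF X, of "\<lambda>x. x ^ f"] int by simp
  have "expectation (\<lambda>x. X x ^ f) = (\<integral>x. normal_density 0 \<sigma> x * x ^ f \<partial>lborel)"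
    by (rule distributed_integral[OF X, symmetric]) auto
  also have "\<dots> = normal_moment (\<sigma>\<^sup>2) f"
  proof (cases "even f")
    case True
    then obtain k where k: "f = 2 * k" by (elim evenE)
    have "(\<integral>x. normal_density 0 \<sigma> x * x ^ f \<partial>lborel) = fact (2 * k) / ((2 / \<sigma>\<^sup>2) ^ k * fact k)"
      using integral_normal_moment_even[OF \<sigma>, of 0 k] k by simp
    also have "\<dots> = real (dfact (2 * k - 1)) * 2 ^ k * fact k / ((2 / \<sigma>\<^sup>2) ^ k * fact k)"
      by (simp only: dfact_odd_mult)
    also have "\<dots> = real (dfact (2 * k - 1)) * (\<sigma>\<^sup>2) ^ k"
      using \<sigma> by (simp add: power_divide)
    finally show ?thesis by (simp add: normal_moment_def k)
  next
    case False
    then obtain k where "f = 2 * k + 1" by (elim oddE)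
    then show ?thesis
      using integral_normal_moment_odd[OF \<sigma>, of 0 k] by (simp add: normal_moment_def)
  qed
  finally show "expectation (\<lambda>x. X x ^ f) = normal_moment (\<sigma>\<^sup>2) f" .
qed

lemma length_sorted_list_of_multiset [simp]: "length (sorted_list_of_multiset M) = size M"
  by (metis mset_sorted_list_of_multiset size_mset)

lemma indep_vars_wig_entries:
  assumes "\<And>N. N \<in> \<N> \<Longrightarrow> size N = p \<and> set_mset N \<subseteq> {..<n}"
  shows "prob_space.indep_vars (gauss_space p n) (\<lambda>_. borel)
           (\<lambda>N G. wig p G (sorted_list_of_multiset N)) \<N>"
proof -
  interpret prob_space "gauss_space p n" by (rule prob_space_gauss_space)
  define Y where "Y N g = (\<Prod>x\<in>set_mset N. fact (count N x)) / sqrt (fact p) *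
                          (\<Sum>xs\<in>permutations_of_multiset N. g xs)" for N and g :: "nat list \<Rightarrow> real"
  have "disjoint_family_on permutations_of_multiset \<N>"
    by (auto simp: disjoint_family_on_def dest: permutations_of_multisetD)
  then have "indep_vars (\<lambda>N. \<Pi>\<^sub>M xs\<in>permutations_of_multiset N. borel)
               (\<lambda>N G. \<lambda>xs\<in>permutations_of_multiset N. G xs) \<N>"
    using assms permutations_of_multiset_subset_idx
    by (intro indep_vars_restrict[OF indep_vars_gauss_space_coordinates]) auto
  then have "indep_vars (\<lambda>_. borel) (\<lambda>N G. Y N (\<lambda>xs\<in>permutations_of_multiset N. G xs)) \<N>"
    by (rule indep_vars_compose2) (simp add: Y_def)
  moreover have "Y N (\<lambda>xs\<in>permutations_of_multiset N. G xs) = wig p G (sorted_list_of_multiset N)"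
    if "N \<in> \<N>" for N G
    using assms[OF that] by (simp add: Y_def wig_eq_sum_permutations_of_multiset)
  ultimately show ?thesis
    by (simp cong: indep_vars_cong)
qed

section \<open>Neighborhood labels and recoloring\<close>

lemma set_lab_at: "set_mset (lab_at ends E i v) \<subseteq> i ` E"
proof (cases "finite E")
  case True
  then show ?thesis
    unfolding lab_at_def by (induction E rule: finite_induct) (auto split: if_splits)
qed (simp add: lab_at_def)

lemma size_lab_at: "finite E \<Longrightarrow> size (lab_at ends E i v) = (\<Sum>e\<in>E. count (ends e) v)"
  unfolding lab_at_def by (induction E rule: finite_induct) auto

lemma lab_at_comp: "lab_at ends E (g \<circ> i) v = image_mset g (lab_at ends E i v)"
proof (cases "finite E")
  case True
  then show ?thesis
    unfolding lab_at_def by (induction E rule: finite_induct) auto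
qed (simp add: lab_at_def)

lemma lab_at_restrict: "lab_at ends E (restrict i E) = lab_at ends E i"
  unfolding lab_at_def by (intro ext sum.cong) auto

lemma lab_at_comp_eq_iff:
  assumes "inj_on g (i ` E)"
  shows "lab_at ends E (g \<circ> i) u = lab_at ends E (g \<circ> i) v \<longleftrightarrow>
         lab_at ends E i u = lab_at ends E i v"
proof
  assume "lab_at ends E (g \<circ> i) u = lab_at ends E (g \<circ> i) v"
  then show "lab_at ends E i u = lab_at ends E i v"
    unfolding lab_at_comp
    by (rule multiset.inj_map_strong[rotated])
       (use assms set_lab_at[of ends E i] in \<open>simp add: inj_on_def subset_iff; blast\<close>)
qed (simp add: lab_at_comp)

lemma count_image_mset_inj_on:
  assumes "inj_on g (set_mset N)" "j \<in># N"
  shows "count (image_mset g N) (g j) = count N j"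
proof -
  have "g -` {g j} \<inter> set_mset N = {j}"
    using assms by (auto simp: inj_on_def)
  then show ?thesis by (simp add: count_image_mset)
qed

lemma even_coloring_comp:
  assumes "inj_on g (i ` E)"
  shows "even_coloring V E ends (g \<circ> i) = even_coloring V E ends i"
  unfolding even_coloring_def lab_at_comp_eq_iff[OF assms] ..

lemma weight_comp:
  assumes "inj_on g (i ` E)"
  shows "weight V E ends (g \<circ> i) = weight V E ends i"
proof -
  let ?l = "lab_at ends E i"
  have inj_image: "inj_on (image_mset g) (?l ` V)"
    using lab_at_comp_eq_iff[OF assms, of ends] by (auto simp: inj_on_def lab_at_comp)
  have inj_N: "inj_on g (set_mset (?l v))" for v
    using assms set_lab_at[of ends E i v] by (rule inj_on_subset)
  have fiber: "{u\<in>V. lab_at ends E (g \<circ> i) u = image_mset g (?l v)} = {u\<in>V. ?l u = ?l v}" for v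
    using lab_at_comp_eq_iff[OF assms, of ends] by (simp add: lab_at_comp)
  have factors: "(\<Prod>j\<in>set_mset (image_mset g (?l v)). fact (count (image_mset g (?l v)) j) ^ m) =
        (\<Prod>j\<in>set_mset (?l v). (fact (count (?l v) j) :: real) ^ m)" for v m
    using inj_N[of v] by (simp add: prod.reindex count_image_mset_inj_on)
  have image: "lab_at ends E (g \<circ> i) ` V = image_mset g ` (?l ` V)"
    by (auto simp: lab_at_comp)
  show ?thesis
    unfolding weight_def image prod.reindex[OF inj_image]
    by (intro prod.cong refl) (erule imageE, hypsubst, simp only: Let_def o_apply fiber factors)
qed

lemma even_coloring_restrict: "even_coloring V E ends (restrict i E) = even_coloring V E ends i"
  unfolding even_coloring_def lab_at_restrict ..

lemma weight_restrict: "weight V E ends (restrict i E) = weight V E ends i"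
  unfolding weight_def lab_at_restrict ..

lemma dfact_pos: "dfact m > 0"
  by (induction m rule: dfact.induct) auto

lemma weight_pos: "weight V E ends \<sigma> > 0"
  unfolding weight_def Let_def by (intro prod_pos mult_pos_pos) (auto simp: dfact_pos)

section \<open>The expectation as a sum over even labelings\<close>

lemma prod_normal_moment_eq_weight:
  assumes "finite V"
  shows "(\<Prod>N\<in>lab_at ends E i ` V.
            normal_moment (\<Prod>j\<in>set_mset N. fact (count N j)) (card {v\<in>V. lab_at ends E i v = N}))
         = (if even_coloring V E ends i then weight V E ends i else 0)"
proof (cases "even_coloring V E ends i")
  case True
  have "normal_moment (\<Prod>j\<in>set_mset N. fact (count N j)) (card {v\<in>V. lab_at ends E i v = N}) =
        real (dfact (card {v\<in>V. lab_at ends E i v = N} - 1)) *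
        (\<Prod>j\<in>set_mset N. fact (count N j) ^ (card {v\<in>V. lab_at ends E i v = N} div 2))"
    if "N \<in> lab_at ends E i ` V" for N
    using True that by (auto simp: even_coloring_def normal_moment_def prod_power_distrib)
  then show ?thesis
    using True unfolding weight_def Let_def by (simp cong: prod.cong)
next
  case False
  then obtain v where "v \<in> V" "odd (card {u\<in>V. lab_at ends E i u = lab_at ends E i v})"
    unfolding even_coloring_def by blast
  then have "(\<Prod>N\<in>lab_at ends E i ` V.
      normal_moment (\<Prod>j\<in>set_mset N. fact (count N j)) (card {v\<in>V. lab_at ends E i v = N})) = 0"
    using assms by (intro prod_zero bexI[of _ "lab_at ends E i v"]) (auto simp: normal_moment_def)
  then show ?thesis
    using False by simp
qed

lemma expectation_labeling_term:
  assumes reg: "p_regular_multigraph p V E ends" and i: "i \<in> E \<rightarrow>\<^sub>E {..<n}"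
  shows "integrable (gauss_space p n)
           (\<lambda>G. \<Prod>v\<in>V. wig p G (sorted_list_of_multiset (lab_at ends E i v)))"
    and "(\<integral>G. (\<Prod>v\<in>V. wig p G (sorted_list_of_multiset (lab_at ends E i v))) \<partial>gauss_space p n)
         = (if even_coloring V E ends i then weight V E ends i else 0)"
proof -
  interpret prob_space "gauss_space p n" by (rule prob_space_gauss_space)
  have fin: "finite V" "finite E" and deg: "\<And>v. v \<in> V \<Longrightarrow> (\<Sum>e\<in>E. count (ends e) v) = p"
    using reg by (auto simp: p_regular_multigraph_def)
  let ?lab = "lab_at ends E i"
  define W where "W = (\<lambda>N G. wig p G (sorted_list_of_multiset N))"
  define f where "f N = card {v\<in>V. ?lab v = N}" for N
  define s :: "nat multiset \<Rightarrow> real" where "s N = (\<Prod>j\<in>set_mset N. fact (count N j))" for N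
  have entries: "size N = p \<and> set_mset N \<subseteq> {..<n}" if "N \<in> ?lab ` V" for N
    using that i set_lab_at[of ends E i] by (auto simp: size_lab_at fin deg PiE_def Pi_def)
  have prod_eq: "(\<Prod>v\<in>V. W (?lab v) G) = (\<Prod>N\<in>?lab ` V. W N G ^ f N)" for G
  proof -
    have "(\<Prod>v\<in>V. W (?lab v) G) = (\<Prod>N\<in>?lab ` V. \<Prod>v\<in>{v\<in>V. ?lab v = N}. W (?lab v) G)"
      by (rule prod.image_gen[OF fin(1)])
    also have "\<dots> = (\<Prod>N\<in>?lab ` V. W N G ^ f N)"
      by (intro prod.cong refl) (simp add: f_def)
    finally show ?thesis .
  qed
  have "indep_vars (\<lambda>_. borel) (\<lambda>N. (\<lambda>x. x ^ f N) \<circ> W N) (?lab ` V)"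
    unfolding W_def by (rule indep_vars_compose[OF indep_vars_wig_entries[OF entries]]) measurable
  then have ind: "indep_vars (\<lambda>_. borel) (\<lambda>N G. W N G ^ f N) (?lab ` V)"
    by (simp add: comp_def)
  have moment: "integrable (gauss_space p n) (\<lambda>G. W N G ^ f N)"
    "expectation (\<lambda>G. W N G ^ f N) = normal_moment (s N) (f N)" if "N \<in> ?lab ` V" for N
  proof -
    have "distributed (gauss_space p n) lborel (W N) (normal_density 0 (sqrt (s N)))"
      using wig_entry_distributed[of "sorted_list_of_multiset N" p n] entries[OF that]
      by (simp add: W_def s_def)
    moreover have "s N > 0"
      by (auto simp: s_def intro: prod_pos)
    ultimately show "integrable (gauss_space p n) (\<lambda>G. W N G ^ f N)"
      "expectation (\<lambda>G. W N G ^ f N) = normal_moment (s N) (f N)"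
      using normal_moment_distributed[of "W N" "sqrt (s N)"] by simp_all
  qed
  show "integrable (gauss_space p n)
           (\<lambda>G. \<Prod>v\<in>V. wig p G (sorted_list_of_multiset (lab_at ends E i v)))"
    using indep_vars_integrable[OF finite_imageI[OF fin(1)] ind moment(1)] prod_eq
    by (simp add: W_def)
  have "expectation (\<lambda>G. \<Prod>v\<in>V. W (?lab v) G) = (\<Prod>N\<in>?lab ` V. normal_moment (s N) (f N))"
    unfolding prod_eq
    by (simp add: indep_vars_lebesgue_integral[OF finite_imageI[OF fin(1)] ind moment(1)] moment(2))
  then show "(\<integral>G. (\<Prod>v\<in>V. wig p G (sorted_list_of_multiset (lab_at ends E i v))) \<partial>gauss_space p n)
         = (if even_coloring V E ends i then weight V E ends i else 0)"
    using prod_normal_moment_eq_weight[OF fin(1), of ends E i] by (simp add: W_def s_def f_def)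
qed

lemma wig_moment_eq_sum_even_labelings:
  assumes reg: "p_regular_multigraph p V E ends"
  shows "wig_moment p n V E ends =
           (\<Sum>i\<in>{i\<in>E \<rightarrow>\<^sub>E {..<n}. even_coloring V E ends i}. weight V E ends i)"
proof -
  have fin: "finite (E \<rightarrow>\<^sub>E {..<n})"
    using reg by (intro finite_PiE) (auto simp: p_regular_multigraph_def)
  have "wig_moment p n V E ends = (\<Sum>i\<in>E \<rightarrow>\<^sub>E {..<n}.
          \<integral>G. (\<Prod>v\<in>V. wig p G (sorted_list_of_multiset (lab_at ends E i v))) \<partial>gauss_space p n)"
    unfolding wig_moment_def mG_def
    using expectation_labeling_term(1)[OF reg] by (subst Bochner_Integration.integral_sum) auto
  also have "\<dots> = (\<Sum>i\<in>E \<rightarrow>\<^sub>E {..<n}. if even_coloring V E ends i then weight V E ends i else 0)"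
    by (intro sum.cong refl expectation_labeling_term(2)[OF reg])
  also have "\<dots> = (\<Sum>i\<in>{i\<in>E \<rightarrow>\<^sub>E {..<n}. even_coloring V E ends i}. weight V E ends i)"
    by (rule sum.inter_filter[OF fin, symmetric])
  finally show ?thesis .
qed

section \<open>Falling factorials\<close>

definition falling_fact :: "nat \<Rightarrow> nat \<Rightarrow> nat" where
  "falling_fact n k = (\<Prod>j<k. n - j)"

lemma card_inj_funcset_lessThan:
  assumes "finite A"
  shows "card {g \<in> {..<k} \<rightarrow>\<^sub>E A. inj_on g {..<k}} = falling_fact (card A) k"
  using card_inj_on_subset_funcset[of "{..<k}" A "{..<k}"] assms
  by (simp add: falling_fact_def atLeast0LessThan)

lemma falling_fact_self: "falling_fact k k = fact k"
proof (induction k)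
  case (Suc k)
  have "falling_fact (Suc k) (Suc k) = Suc k * (\<Prod>j<k. Suc k - Suc j)"
    unfolding falling_fact_def by (subst prod.lessThan_Suc_shift) simp
  then show ?case
    using Suc by (simp add: falling_fact_def)
qed (simp add: falling_fact_def)

lemma falling_fact_le_power: "falling_fact n k \<le> n ^ k"
proof -
  have "falling_fact n k \<le> (\<Prod>j<k. n)"
    unfolding falling_fact_def by (intro prod_mono) auto
  then show ?thesis by simp
qed

lemma power_minus_falling_fact_le:
  assumes "k \<le> n"
  shows "real n ^ k - falling_fact n k \<le> real k ^ 2 * real n ^ (k - 1)"
  using assms
proof (induction k)
  case 0
  then show ?case by (simp add: falling_fact_def)
next
  case (Suc k)
  let ?x = "real n" and ?Q = "real (falling_fact n k)"
  have IH: "?x ^ k - ?Q \<le> real k ^ 2 * ?x ^ (k - 1)"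
    using Suc by simp
  have Q: "0 \<le> ?Q" "?Q \<le> ?x ^ k"
    using falling_fact_le_power[of n k] by (simp_all flip: of_nat_power)
  have "real (falling_fact n (Suc k)) = ?Q * (?x - real k)"
    using Suc.prems by (simp add: falling_fact_def of_nat_diff)
  then have "?x ^ Suc k - real (falling_fact n (Suc k)) = ?x * (?x ^ k - ?Q) + real k * ?Q"
    by (simp add: algebra_simps)
  also have "\<dots> \<le> ?x * (real k ^ 2 * ?x ^ (k - 1)) + real k * ?x ^ k"
    using IH Q by (intro add_mono mult_left_mono) auto
  also have "?x * (real k ^ 2 * ?x ^ (k - 1)) = real k ^ 2 * ?x ^ k"
    by (cases k) auto
  also have "real k ^ 2 * ?x ^ k + real k * ?x ^ k \<le> real (Suc k) ^ 2 * ?x ^ (Suc k - 1)"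
    by (simp add: power2_eq_square algebra_simps)
  finally show ?case .
qed

lemma sum_falling_fact_asymptotics:
  fixes a :: "nat \<Rightarrow> real"
  assumes "c \<le> n"
  shows "\<bar>(\<Sum>k\<le>c. a k * falling_fact n k) - a c * real n ^ c\<bar>
           \<le> (\<bar>a c\<bar> * real c ^ 2 + (\<Sum>k<c. \<bar>a k\<bar>)) * (real n ^ c / real n)"
proof (cases "c = 0")
  case True
  then show ?thesis by (simp add: falling_fact_def)
next
  case False
  then have n: "real n \<ge> 1"
    using assms by simp
  have n_power: "real n ^ c / real n = real n ^ (c - 1)"
    using False n by (simp add: power_diff)
  have small: "real (falling_fact n k) \<le> real n ^ (c - 1)" if "k < c" for k
  proof -
    have "real (falling_fact n k) \<le> real n ^ k"
      using falling_fact_le_power[of n k] by (simp flip: of_nat_power)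
    also have "\<dots> \<le> real n ^ (c - 1)"
      using that n by (intro power_increasing) auto
    finally show ?thesis .
  qed
  have "(\<Sum>k\<le>c. a k * falling_fact n k) - a c * real n ^ c =
        (\<Sum>k<c. a k * falling_fact n k) - a c * (real n ^ c - falling_fact n c)"
    by (simp add: lessThan_Suc_atMost[symmetric] algebra_simps)
  also have "\<bar>\<dots>\<bar> \<le> (\<Sum>k<c. \<bar>a k\<bar> * falling_fact n k) + \<bar>a c\<bar> * (real n ^ c - falling_fact n c)"
    using falling_fact_le_power[of n c]
    by (intro order_trans[OF abs_triangle_ineq4] add_mono order_trans[OF sum_abs])
       (auto simp: abs_mult simp flip: of_nat_power)
  also have "\<dots> \<le> (\<Sum>k<c. \<bar>a k\<bar> * real n ^ (c - 1)) + \<bar>a c\<bar> * (real c ^ 2 * real n ^ (c - 1))"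
    using small power_minus_falling_fact_le[OF assms]
    by (intro add_mono sum_mono mult_left_mono) auto
  also have "\<dots> = (\<bar>a c\<bar> * real c ^ 2 + (\<Sum>k<c. \<bar>a k\<bar>)) * (real n ^ c / real n)"
    unfolding n_power by (simp add: sum_distrib_right algebra_simps)
  finally show ?thesis .
qed

section \<open>Grouping labelings by the number of labels used\<close>

lemma factorization_through_image:
  assumes g: "inj_on g {..<k}" "g ` {..<k} = i ` E" and i: "i \<in> extensional E"
  defines "\<sigma> \<equiv> restrict (\<lambda>e. the_inv_into {..<k} g (i e)) E"
  shows "\<sigma> \<in> E \<rightarrow>\<^sub>E {..<k}" "\<sigma> ` E = {..<k}" "restrict (g \<circ> \<sigma>) E = i"
proof -
  have into: "\<sigma> e \<in> {..<k}" and inverse: "g (\<sigma> e) = i e" if "e \<in> E" for e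
  proof -
    have "i e \<in> g ` {..<k}" "\<sigma> e = the_inv_into {..<k} g (i e)"
      using g(2) that by (auto simp: \<sigma>_def)
    then show "\<sigma> e \<in> {..<k}" "g (\<sigma> e) = i e"
      using the_inv_into_into[OF g(1) _ subset_refl] f_the_inv_into_f[OF g(1)] by simp_all
  qed
  show "\<sigma> \<in> E \<rightarrow>\<^sub>E {..<k}"
    using into by (simp add: \<sigma>_def)
  show "restrict (g \<circ> \<sigma>) E = i"
    using i inverse by (intro extensionalityI[OF _ i]) auto
  have "j \<in> \<sigma> ` E" if "j < k" for j
  proof -
    have "g j \<in> i ` E"
      using that g(2)[symmetric] by simp
    then obtain e where e: "e \<in> E" "g j = i e" ..
    then have "\<sigma> e = j"
      using the_inv_into_f_eq[OF g(1) e(2)] that by (simp add: \<sigma>_def)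
    then show ?thesis
      using e(1) by (rule image_eqI[OF sym])
  qed
  then show "\<sigma> ` E = {..<k}"
    using into by (intro subset_antisym image_subsetI subsetI) auto
qed

lemma restrict_comp_inj_cancel:
  assumes g: "inj_on g {..<k}" and \<sigma>: "\<sigma> \<in> E \<rightarrow>\<^sub>E {..<k}" and \<tau>: "\<tau> \<in> E \<rightarrow>\<^sub>E {..<k}"
    and eq: "restrict (g \<circ> \<sigma>) E = restrict (g \<circ> \<tau>) E"
  shows "\<sigma> = \<tau>"
proof (rule PiE_ext[OF \<sigma> \<tau>])
  fix e assume "e \<in> E"
  then show "\<sigma> e = \<tau> e"
    using inj_onD[OF g _ PiE_mem[OF \<sigma>] PiE_mem[OF \<tau>]] fun_cong[OF eq, of e] by simp
qed

lemma card_surj_inj_factorizations: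
  assumes E: "finite E" and i: "i \<in> E \<rightarrow>\<^sub>E A" "card (i ` E) = k"
  shows "card {x \<in> {\<sigma> \<in> E \<rightarrow>\<^sub>E {..<k}. \<sigma> ` E = {..<k}} \<times> {g \<in> {..<k} \<rightarrow>\<^sub>E A. inj_on g {..<k}}.
                restrict (snd x \<circ> fst x) E = i} = fact k"
    (is "card ?F = _")
proof -
  define C where "C = {g \<in> {..<k} \<rightarrow>\<^sub>E i ` E. inj_on g {..<k}}"
  have "card C = falling_fact (card (i ` E)) k"
    unfolding C_def using E by (intro card_inj_funcset_lessThan) simp
  then have "card C = fact k"
    using i(2) by (simp add: falling_fact_self)
  have onto: "g ` {..<k} = i ` E" if "g \<in> C" for g
  proof -
    have g: "g \<in> {..<k} \<rightarrow>\<^sub>E i ` E" "inj_on g {..<k}"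
      using that by (simp_all add: C_def)
    have "g ` {..<k} \<subseteq> i ` E"
      using PiE_mem[OF g(1)] by blast
    moreover have "card (g ` {..<k}) = card (i ` E)"
      using card_image[OF g(2)] i(2) by simp
    ultimately show ?thesis
      using E by (intro card_subset_eq) auto
  qed
  have "bij_betw snd ?F C"
  proof (rule bij_betw_imageI)
    show "inj_on snd ?F"
    proof (rule inj_onI)
      fix x y assume x: "x \<in> ?F" and y: "y \<in> ?F" and snd: "snd x = snd y"
      have "fst x = fst y"
      proof (rule restrict_comp_inj_cancel)
        show "inj_on (snd x) {..<k}" "fst x \<in> E \<rightarrow>\<^sub>E {..<k}" "fst y \<in> E \<rightarrow>\<^sub>E {..<k}"
          using x y by (simp_all add: mem_Times_iff)
        show "restrict (snd x \<circ> fst x) E = restrict (snd x \<circ> fst y) E"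
          using x y snd by simp
      qed
      with snd show "x = y"
        by (simp add: prod_eq_iff)
    qed
    show "snd ` ?F = C"
    proof
      show "snd ` ?F \<subseteq> C"
      proof
        fix g assume "g \<in> snd ` ?F"
        then obtain \<sigma> where \<sigma>: "\<sigma> ` E = {..<k}" "restrict (g \<circ> \<sigma>) E = i"
          and g: "g \<in> {..<k} \<rightarrow>\<^sub>E A" "inj_on g {..<k}"
          by force
        have "g ` {..<k} = restrict (g \<circ> \<sigma>) E ` E"
          by (simp add: \<sigma>(1)[symmetric] image_comp)
        then have "g ` {..<k} = i ` E"
          by (simp add: \<sigma>(2))
        then show "g \<in> C"
          using g by (auto simp: C_def PiE_iff)
      qed
      show "C \<subseteq> snd ` ?F"
      proof
        fix g assume "g \<in> C"
        then have g: "inj_on g {..<k}" "g ` {..<k} = i ` E"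
          using onto by (simp_all add: C_def)
        have "i ` E \<subseteq> A"
          using PiE_mem[OF i(1)] by blast
        then have "g \<in> {..<k} \<rightarrow>\<^sub>E A"
          using \<open>g \<in> C\<close> PiE_mono[of "{..<k}" "\<lambda>_. i ` E" "\<lambda>_. A"] by (auto simp: C_def)
        define \<sigma> where "\<sigma> = restrict (\<lambda>e. the_inv_into {..<k} g (i e)) E"
        have "(\<sigma>, g) \<in> ?F"
          using factorization_through_image[OF g] i(1) g \<open>g \<in> {..<k} \<rightarrow>\<^sub>E A\<close>
          by (simp add: \<sigma>_def PiE_iff)
        then show "g \<in> snd ` ?F"
          by (rule image_eqI[rotated]) simp
      qed
    qed
  qed
  then have "card ?F = card C"
    by (rule bij_betw_same_card)
  with \<open>card C = fact k\<close> show ?thesis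
    by simp
qed

lemma sum_surj_inj_factorizations:
  fixes F :: "('e \<Rightarrow> 'a) \<Rightarrow> real"
  assumes E: "finite E" and A: "finite A"
  shows "(\<Sum>\<sigma>\<in>{\<sigma>\<in>E \<rightarrow>\<^sub>E {..<k}. \<sigma> ` E = {..<k}}. \<Sum>g\<in>{g\<in>{..<k} \<rightarrow>\<^sub>E A. inj_on g {..<k}}.
            F (restrict (g \<circ> \<sigma>) E))
         = fact k * (\<Sum>i\<in>{i\<in>E \<rightarrow>\<^sub>E A. card (i ` E) = k}. F i)"
proof -
  let ?S = "{\<sigma>\<in>E \<rightarrow>\<^sub>E {..<k}. \<sigma> ` E = {..<k}}" and ?I = "{g\<in>{..<k} \<rightarrow>\<^sub>E A. inj_on g {..<k}}"
    and ?T = "{i\<in>E \<rightarrow>\<^sub>E A. card (i ` E) = k}"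
  define h where "h x = restrict (snd x \<circ> fst x) E" for x :: "('e \<Rightarrow> nat) \<times> (nat \<Rightarrow> 'a)"
  have fin: "finite (?S \<times> ?I)" "finite ?T"
    using E A by (simp_all add: finite_PiE)
  have "h x \<in> ?T" if x: "x \<in> ?S \<times> ?I" for x
  proof -
    obtain \<sigma> g where x: "x = (\<sigma>, g)" and \<sigma>: "\<sigma> \<in> ?S" and g: "g \<in> ?I"
      using x by blast
    have "h x ` E = g ` \<sigma> ` E"
      by (simp add: x h_def image_comp)
    also have "\<dots> = g ` {..<k}"
      using \<sigma> by simp
    finally have "h x ` E = g ` {..<k}" .
    then have "card (h x ` E) = k"
      using g by (simp add: card_image)
    moreover have "g (\<sigma> e) \<in> A" if "e \<in> E" for e
    proof -
      have "\<sigma> e \<in> {..<k}"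
        using PiE_mem[of \<sigma> E "\<lambda>_. {..<k}" e] \<sigma> that by simp
      then show ?thesis
        using PiE_mem[of g "{..<k}" "\<lambda>_. A" "\<sigma> e"] g by simp
    qed
    then have "h x \<in> E \<rightarrow>\<^sub>E A"
      by (simp add: x h_def)
    ultimately show ?thesis
      by simp
  qed
  then have "h ` (?S \<times> ?I) \<subseteq> ?T"
    by (rule image_subsetI)
  have "(\<Sum>\<sigma>\<in>?S. \<Sum>g\<in>?I. F (restrict (g \<circ> \<sigma>) E)) = (\<Sum>x\<in>?S \<times> ?I. F (h x))"
    by (simp add: sum.cartesian_product h_def split_def)
  also have "\<dots> = (\<Sum>i\<in>?T. \<Sum>x\<in>{x\<in>?S \<times> ?I. h x = i}. F (h x))"
    by (rule sum.group[OF fin \<open>h ` (?S \<times> ?I) \<subseteq> ?T\<close>, symmetric])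
  also have "\<dots> = (\<Sum>i\<in>?T. fact k * F i)"
  proof (rule sum.cong[OF refl])
    fix i assume "i \<in> ?T"
    then have "card {x\<in>?S \<times> ?I. h x = i} = fact k"
      using card_surj_inj_factorizations[OF E, of i A k] by (simp add: h_def)
    then show "(\<Sum>x\<in>{x\<in>?S \<times> ?I. h x = i}. F (h x)) = fact k * F i"
      by simp
  qed
  finally show ?thesis
    by (simp add: sum_distrib_left)
qed

definition even_colorings_onto ::
  "'v set \<Rightarrow> 'e set \<Rightarrow> ('e \<Rightarrow> 'v multiset) \<Rightarrow> nat \<Rightarrow> ('e \<Rightarrow> nat) set" where
  "even_colorings_onto V E ends k =
     {\<sigma>\<in>E \<rightarrow>\<^sub>E {..<k}. \<sigma> ` E = {..<k} \<and> even_coloring V E ends \<sigma>}"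

lemma sum_weight_even_labelings_card_image:
  assumes E: "finite E"
  shows "(\<Sum>i\<in>{i\<in>E \<rightarrow>\<^sub>E {..<n}. even_coloring V E ends i \<and> card (i ` E) = k}. weight V E ends i)
         = (\<Sum>\<sigma>\<in>even_colorings_onto V E ends k. weight V E ends \<sigma>) / fact k * falling_fact n k"
proof -
  let ?S = "{\<sigma>\<in>E \<rightarrow>\<^sub>E {..<k}. \<sigma> ` E = {..<k}}"
    and ?T = "{i\<in>E \<rightarrow>\<^sub>E {..<n}. card (i ` E) = k}"
  define F where "F i = (if even_coloring V E ends i then weight V E ends i else 0)" for i
  have invariant: "F (restrict (g \<circ> \<sigma>) E) = F \<sigma>" if "\<sigma> ` E = {..<k}" "inj_on g {..<k}" for \<sigma> g
    using that even_coloring_comp[of g \<sigma> E V ends] weight_comp[of g \<sigma> E V ends]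
    by (simp add: F_def even_coloring_restrict weight_restrict)
  have fin: "finite ?S" "finite ?T"
    using E by (simp_all add: finite_PiE)
  have "fact k * (\<Sum>i\<in>?T. F i) =
        (\<Sum>\<sigma>\<in>?S. \<Sum>g\<in>{g\<in>{..<k} \<rightarrow>\<^sub>E {..<n}. inj_on g {..<k}}. F \<sigma>)"
    using sum_surj_inj_factorizations[OF E, where A = "{..<n}" and k = k and F = F] invariant
    by simp
  also have "\<dots> = falling_fact n k * (\<Sum>\<sigma>\<in>?S. F \<sigma>)"
    using card_inj_funcset_lessThan[of "{..<n}" k] by (simp add: sum_distrib_left)
  finally have factorized: "fact k * (\<Sum>i\<in>?T. F i) = falling_fact n k * (\<Sum>\<sigma>\<in>?S. F \<sigma>)" .
  have "even_colorings_onto V E ends k = {\<sigma>\<in>?S. even_coloring V E ends \<sigma>}"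
    by (auto simp: even_colorings_onto_def)
  then have onto: "(\<Sum>\<sigma>\<in>?S. F \<sigma>) = (\<Sum>\<sigma>\<in>even_colorings_onto V E ends k. weight V E ends \<sigma>)"
    unfolding F_def by (simp only: sum.inter_filter[OF fin(1)])
  have "{i\<in>E \<rightarrow>\<^sub>E {..<n}. even_coloring V E ends i \<and> card (i ` E) = k} =
        {i\<in>?T. even_coloring V E ends i}"
    by auto
  then have labelings: "(\<Sum>i\<in>?T. F i) =
      (\<Sum>i\<in>{i\<in>E \<rightarrow>\<^sub>E {..<n}. even_coloring V E ends i \<and> card (i ` E) = k}. weight V E ends i)"
    unfolding F_def by (simp only: sum.inter_filter[OF fin(2)])
  show ?thesis
    using factorized unfolding onto labelings by (simp add: field_simps)
qed

lemma finite_card_image_even_colorings: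
  assumes "finite E"
  shows "finite {card (\<sigma> ` E) |\<sigma>. even_coloring V E ends \<sigma>}"
proof (rule finite_subset)
  show "{card (\<sigma> ` E) |\<sigma>. even_coloring V E ends \<sigma>} \<subseteq> {..card E}"
    using card_image_le[OF assms] by blast
qed simp

lemma card_image_le_c_max:
  assumes "finite E" "even_coloring V E ends \<sigma>"
  shows "card (\<sigma> ` E) \<le> c_max V E ends"
  unfolding c_max_def
  by (rule Max_ge[OF finite_card_image_even_colorings[OF assms(1)]]) (use assms(2) in auto)

lemma c_max_attained:
  assumes "finite E" "even_coloring V E ends \<sigma>"
  obtains \<tau> where "even_coloring V E ends \<tau>" "card (\<tau> ` E) = c_max V E ends"
proof -
  have "c_max V E ends \<in> {card (\<sigma> ` E) |\<sigma>. even_coloring V E ends \<sigma>}"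
    unfolding c_max_def
    by (rule Max_in[OF finite_card_image_even_colorings[OF assms(1)]]) (use assms(2) in auto)
  then show ?thesis
    using that by auto
qed

lemma even_colorings_onto_nonempty:
  assumes "finite E" "even_coloring V E ends \<sigma>"
  shows "even_colorings_onto V E ends (card (\<sigma> ` E)) \<noteq> {}"
proof -
  obtain \<beta> where \<beta>: "bij_betw \<beta> (\<sigma> ` E) {..<card (\<sigma> ` E)}"
    using ex_bij_betw_finite_nat[of "\<sigma> ` E"] assms(1) by (auto simp: atLeast0LessThan)
  then have "inj_on \<beta> (\<sigma> ` E)" "restrict (\<beta> \<circ> \<sigma>) E ` E = {..<card (\<sigma> ` E)}"
    by (auto simp: bij_betw_def image_comp)
  then have "restrict (\<beta> \<circ> \<sigma>) E \<in> even_colorings_onto V E ends (card (\<sigma> ` E))"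
    using assms(2) even_coloring_comp[of \<beta> \<sigma> E V ends]
    by (auto simp: even_colorings_onto_def even_coloring_restrict)
  then show ?thesis
    by blast
qed

lemma w_max_pos:
  assumes "finite E" "even_coloring V E ends \<sigma>"
  shows "w_max V E ends > 0"
proof -
  obtain \<tau> where "even_coloring V E ends \<tau>" "card (\<tau> ` E) = c_max V E ends"
    using c_max_attained[OF assms] .
  then have "even_colorings_onto V E ends (c_max V E ends) \<noteq> {}"
    using even_colorings_onto_nonempty[OF assms(1)] by metis
  moreover have "finite (even_colorings_onto V E ends k)" for k
    unfolding even_colorings_onto_def using assms(1) by (simp add: finite_PiE)
  ultimately have "(\<Sum>\<sigma>\<in>even_colorings_onto V E ends (c_max V E ends). weight V E ends \<sigma>) > 0"
    by (intro sum_pos weight_pos)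
  then show ?thesis
    unfolding w_max_def even_colorings_onto_def Let_def by simp
qed

lemma wig_moment_eq_sum_falling_fact:
  assumes reg: "p_regular_multigraph p V E ends"
  shows "wig_moment p n V E ends =
    (\<Sum>k\<le>c_max V E ends.
       (\<Sum>\<sigma>\<in>even_colorings_onto V E ends k. weight V E ends \<sigma>) / fact k * falling_fact n k)"
proof -
  have E: "finite E"
    using reg by (simp add: p_regular_multigraph_def)
  let ?X = "{i\<in>E \<rightarrow>\<^sub>E {..<n}. even_coloring V E ends i}"
  have "finite ?X"
    using E by (simp add: finite_PiE)
  have "wig_moment p n V E ends = (\<Sum>i\<in>?X. weight V E ends i)"
    by (rule wig_moment_eq_sum_even_labelings[OF reg])
  also have "\<dots> = (\<Sum>k\<le>c_max V E ends. \<Sum>i\<in>{i\<in>?X. card (i ` E) = k}. weight V E ends i)"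
    using \<open>finite ?X\<close> card_image_le_c_max[OF E] by (intro sum.group[symmetric]) auto
  also have "\<dots> = (\<Sum>k\<le>c_max V E ends.
       (\<Sum>\<sigma>\<in>even_colorings_onto V E ends k. weight V E ends \<sigma>) / fact k * falling_fact n k)"
    by (intro sum.cong refl)
       (simp only: sum_weight_even_labelings_card_image[OF E, symmetric] mem_Collect_eq conj_assoc)
  finally show ?thesis .
qed

theorem proposition5p2:
  fixes p :: nat and V :: "'v set" and E :: "'e set" and ends :: "'e \<Rightarrow> 'v multiset"
  assumes "p_regular_multigraph p V E ends"
  shows "\<exists>K. \<forall>\<^sub>F n in sequentially.
           \<bar>wig_moment p n V E ends - w_max V E ends * real n ^ c_max V E ends\<bar>
             \<le> K / real n * (w_max V E ends * real n ^ c_max V E ends)"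
proof (cases "\<exists>\<sigma>. even_coloring V E ends \<sigma>")
  case False
  then have "wig_moment p n V E ends = 0" "w_max V E ends = 0" for n
    using wig_moment_eq_sum_even_labelings[OF assms] by (simp_all add: w_max_def Let_def)
  then show ?thesis by simp
next
  case True
  have E: "finite E"
    using assms by (simp add: p_regular_multigraph_def)
  define c where "c = c_max V E ends"
  define a where "a k = (\<Sum>\<sigma>\<in>even_colorings_onto V E ends k. weight V E ends \<sigma>) / fact k" for k
  define D where "D = \<bar>a c\<bar> * real c ^ 2 + (\<Sum>k<c. \<bar>a k\<bar>)"
  have w_max: "w_max V E ends = a c"
    by (simp add: w_max_def a_def c_def even_colorings_onto_def Let_def)
  obtain \<sigma> where "even_coloring V E ends \<sigma>"
    using True ..
  then have "a c > 0"
    using w_max_pos[OF E] w_max by metis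
  have moment: "wig_moment p n V E ends = (\<Sum>k\<le>c. a k * falling_fact n k)" for n
    by (simp add: wig_moment_eq_sum_falling_fact[OF assms] a_def c_def)
  have "\<bar>wig_moment p n V E ends - a c * real n ^ c\<bar> \<le> D / a c / real n * (a c * real n ^ c)"
    if "c \<le> n" for n
  proof -
    have "D / a c / real n * (a c * real n ^ c) = D * (real n ^ c / real n)"
      using \<open>a c > 0\<close> by simp
    then show ?thesis
      using sum_falling_fact_asymptotics[OF that, of a] by (simp add: moment D_def)
  qed
  then show ?thesis
    unfolding w_max c_def[symmetric] by (intro exI eventually_sequentiallyI)
qed

end
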